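(* Let $A\in\mathrm{GL}(3,\mathbb{R})$ be a rotation of angle $\theta$ with $0<\theta<\pi$, and let $B=G^{-1}\,{}^tA^{-1}G$ for some $G\in\mathrm{GL}(3,\mathbb{R})$. Then $\det(\mathrm{Id}-AB)=0$ if and only if there exists a nonzero symmetric matrix $S$ such that $SB={}^tA^{-1}S$.
   Context: A matrix $A\in\mathrm{GL}(3,\mathbb{R})$ is a rotation of angle $\theta$ if there exist $Q\in\mathrm{GL}(3,\mathbb{R})$ and $\mu\ne0$ with $Q^{-1}AQ=\mu R_\theta$, where $R_\theta=\begin{pmatrix}1&0&0\\0&\cos\theta&-\sin\theta\\0&\sin\theta&\cos\theta\end{pmatrix}$. ${}^tM$ denotes the transpose of $M$. *)

theory Defs
  imports "HOL-Analysis.Analysis"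
begin

definition rot_mat :: "real \<Rightarrow> real^3^3" where
  "rot_mat \<theta> = vector [vector [1, 0, 0],
                         vector [0, cos \<theta>, - sin \<theta>],
                         vector [0, sin \<theta>, cos \<theta>]]"

definition is_rotation :: "real^3^3 \<Rightarrow> real \<Rightarrow> bool" where
  "is_rotation A \<theta> \<longleftrightarrow> invertible A \<and>
     (\<exists>Q \<mu>. invertible Q \<and> \<mu> \<noteq> 0 \<and> matrix_inv Q ** A ** Q = \<mu> *\<^sub>R rot_mat \<theta>)"

end

theory Submission
  imports Defs
begin

text \<open>Conjugating by the matrix Q of the rotation turns A into \<open>\<mu> R\<close> with \<open>R = R\<^sub>\<theta>\<close>
  orthogonal, and G into \<open>H = \<^sup>tQ G Q\<close>. Then \<open>det(Id - AB) = 0\<close> iff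
  \<open>det(H \<^sup>tR - R H) = 0\<close>, while a symmetric S with \<open>SB = \<^sup>tA\<^sup>-\<^sup>1S\<close> corresponds to
  \<open>X = (\<^sup>tQ S Q) H\<^sup>-\<^sup>1\<close>, a nonzero matrix commuting with R such that XH is symmetric.
  For \<open>0 < \<theta> < \<pi>\<close> the commutant of R consists of the matrices \<open>a \<oplus> (b + c J)\<close>, and
  symmetry of XH is a system of three linear equations in (a, b, c) with matrix N(H). A direct
  computation gives \<open>det(H \<^sup>tR - R H) = -2 sin \<theta> (1 - cos \<theta>) det N(H)\<close>, so both
  conditions are equivalent to \<open>det N(H) = 0\<close>.\<close>

lemma matrix_inv_inverse:
  fixes A :: "'a::semiring_1^'n^'n"
  assumes "invertible A"
  shows matrix_inv_right: "A ** matrix_inv A = mat 1"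
    and matrix_inv_left: "matrix_inv A ** A = mat 1"
  using someI_ex[OF assms[unfolded invertible_def]] unfolding matrix_inv_def by auto

lemma matrix_inv_unique:
  fixes A B :: "'a::semiring_1^'n^'n"
  assumes "invertible A" "A ** B = mat 1"
  shows "matrix_inv A = B"
proof -
  have "matrix_inv A = matrix_inv A ** (A ** B)" using assms by simp
  also have "\<dots> = B" by (simp add: matrix_mul_assoc matrix_inv_left[OF assms(1)])
  finally show ?thesis .
qed

lemma invertible_matrix_inv:
  fixes A :: "'a::semiring_1^'n^'n"
  assumes "invertible A"
  shows "invertible (matrix_inv A)"
  using matrix_inv_inverse[OF assms] unfolding invertible_def by blast

lemma matrix_inv_matrix_inv:
  fixes A :: "'a::semiring_1^'n^'n"
  assumes "invertible A"
  shows "matrix_inv (matrix_inv A) = A"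
  by (rule matrix_inv_unique[OF invertible_matrix_inv[OF assms] matrix_inv_left[OF assms]])

lemma matrix_inv_mult:
  fixes A B :: "'a::semiring_1^'n^'n"
  assumes "invertible A" "invertible B"
  shows "matrix_inv (A ** B) = matrix_inv B ** matrix_inv A"
proof (rule matrix_inv_unique)
  show "invertible (A ** B)" using assms by (rule invertible_mult)
  have "A ** B ** (matrix_inv B ** matrix_inv A) = A ** (B ** matrix_inv B) ** matrix_inv A"
    by (simp add: matrix_mul_assoc)
  then show "A ** B ** (matrix_inv B ** matrix_inv A) = mat 1"
    by (simp add: assms matrix_inv_right)
qed

lemma transpose_matrix_inv:
  fixes A :: "'a::comm_semiring_1^'n^'n"
  assumes "invertible A"
  shows "transpose A ** transpose (matrix_inv A) = mat 1"
    and "transpose (matrix_inv A) ** transpose A = mat 1"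
  by (simp_all flip: matrix_transpose_mul add: assms matrix_inv_inverse)

lemma matrix_inv_transpose:
  fixes A :: "'a::comm_semiring_1^'n^'n"
  assumes "invertible A"
  shows "matrix_inv (transpose A) = transpose (matrix_inv A)"
  using transpose_matrix_inv[OF assms] matrix_inv_unique invertible_def by blast

lemma matrix_diff_ldistrib:
  fixes A B C :: "'a::ring_1^'n^'n"
  shows "A ** (B - C) = A ** B - A ** C"
  by (simp add: matrix_matrix_mult_def vec_eq_iff sum_subtractf right_diff_distrib)

lemma matrix_diff_rdistrib:
  fixes A B C :: "'a::ring_1^'n^'n"
  shows "(A - B) ** C = A ** C - B ** C"
  by (simp add: matrix_matrix_mult_def vec_eq_iff sum_subtractf left_diff_distrib)

lemma matrix_mul_cancel_right:
  fixes A B C :: "'a::semiring_1^'n^'n"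
  assumes "B ** C = mat 1"
  shows "A ** B ** C = A"
  by (metis assms matrix_mul_assoc matrix_mul_rid)

lemma matrix_mul_scaleR_left:
  fixes A B :: "real^'n^'n"
  shows "(k *\<^sub>R A) ** B = k *\<^sub>R (A ** B)"
  by (simp add: scalar_matrix_assoc)

lemma matrix_mul_scaleR_right:
  fixes A B :: "real^'n^'n"
  shows "A ** (k *\<^sub>R B) = k *\<^sub>R (A ** B)"
  by (simp add: matrix_scalar_ac scalar_matrix_assoc)

lemma matrix_inv_scaleR_orthogonal:
  fixes R :: "real^'n^'n"
  assumes "\<mu> \<noteq> 0" "R ** transpose R = mat 1"
  shows "matrix_inv (\<mu> *\<^sub>R R) = (1 / \<mu>) *\<^sub>R transpose R"
proof (rule matrix_inv_unique)
  show "invertible (\<mu> *\<^sub>R R)"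
    using assms by (metis invertible_right_inverse scalar_invertible)
  show "\<mu> *\<^sub>R R ** ((1 / \<mu>) *\<^sub>R transpose R) = mat 1"
    using assms by (simp add: matrix_mul_scaleR_left matrix_mul_scaleR_right)
qed

lemma transpose_matrix_inv_similar:
  fixes A T :: "real^'n^'n"
  assumes T: "invertible T" and A: "invertible A"
  shows "transpose T ** transpose (matrix_inv A) ** transpose (matrix_inv T)
    = transpose (matrix_inv (matrix_inv T ** A ** T))"
proof -
  have "matrix_inv (matrix_inv T ** A ** T) = matrix_inv T ** matrix_inv A ** T"
    using T A by (simp add: matrix_inv_mult invertible_mult invertible_matrix_inv
        matrix_inv_matrix_inv matrix_mul_assoc)
  then show ?thesis
    by (simp add: matrix_transpose_mul matrix_mul_assoc)
qed

lemma similar_conj_eq_congruence_conj: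
  fixes C G Q :: "real^'n^'n"
  assumes Q: "invertible Q" and G: "invertible G"
  shows "matrix_inv Q ** (matrix_inv G ** C ** G) ** Q
    = matrix_inv (transpose Q ** G ** Q) ** (transpose Q ** C ** transpose (matrix_inv Q))
        ** (transpose Q ** G ** Q)"
proof -
  have "matrix_inv (transpose Q ** G ** Q) = matrix_inv Q ** matrix_inv G ** transpose (matrix_inv Q)"
    using Q G by (simp add: matrix_inv_mult invertible_mult transpose_invertible matrix_inv_transpose
        matrix_mul_assoc)
  then show ?thesis
    by (simp add: matrix_mul_assoc matrix_mul_cancel_right[OF transpose_matrix_inv(2)[OF Q]])
qed

lemma det_eq_0_iff_kernel:
  fixes A :: "real^'n^'n"
  shows "det A = 0 \<longleftrightarrow> (\<exists>x. x \<noteq> 0 \<and> A *v x = 0)"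
  using rank_bound[of A] by (auto simp: det_eq_0_rank matrix_nonfull_linear_equations_eq)

lemma det_one_minus_mult_similar:
  fixes A B T :: "real^'n^'n"
  assumes "invertible T"
  shows "det (mat 1 - (matrix_inv T ** A ** T) ** (matrix_inv T ** B ** T)) = det (mat 1 - A ** B)"
proof -
  have "(matrix_inv T ** A ** T) ** (matrix_inv T ** B ** T) = matrix_inv T ** (A ** B) ** T"
    by (simp add: matrix_mul_assoc matrix_mul_cancel_right[OF matrix_inv_right[OF assms]])
  then have "mat 1 - (matrix_inv T ** A ** T) ** (matrix_inv T ** B ** T)
      = matrix_inv T ** (mat 1 - A ** B) ** T"
    by (simp add: matrix_diff_ldistrib matrix_diff_rdistrib assms matrix_inv_left)
  moreover have "det (matrix_inv T) * det T = 1"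
    by (metis assms det_I det_mul matrix_inv_left)
  ultimately show ?thesis
    by (simp add: det_mul)
qed

definition sym_intertwiner :: "real^'n^'n \<Rightarrow> real^'n^'n \<Rightarrow> real^'n^'n \<Rightarrow> bool" where
  "sym_intertwiner S B C \<longleftrightarrow> S \<noteq> 0 \<and> transpose S = S \<and> S ** B = C ** S"

lemma sym_intertwiner_scaleR:
  assumes "c \<noteq> 0"
  shows "sym_intertwiner S (c *\<^sub>R B) (c *\<^sub>R C) \<longleftrightarrow> sym_intertwiner S B C"
  using assms by (simp add: sym_intertwiner_def matrix_mul_scaleR_left matrix_mul_scaleR_right)

lemma sym_intertwiner_congruence:
  fixes T :: "real^'n^'n"
  assumes T: "invertible T" and S: "sym_intertwiner S B C"
  shows "sym_intertwiner (transpose T ** S ** T)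
           (matrix_inv T ** B ** T) (transpose T ** C ** transpose (matrix_inv T))"
proof -
  have SB: "S ** B = C ** S" using S by (simp add: sym_intertwiner_def)
  note cancel = matrix_mul_cancel_right[OF transpose_matrix_inv(1)[OF T]]
    matrix_mul_cancel_right[OF transpose_matrix_inv(2)[OF T]]
    matrix_mul_cancel_right[OF matrix_inv_right[OF T]] matrix_mul_cancel_right[OF matrix_inv_left[OF T]]
  have "S = transpose (matrix_inv T) ** (transpose T ** S ** T) ** matrix_inv T"
    by (simp add: matrix_mul_assoc cancel transpose_matrix_inv[OF T])
  then have "transpose T ** S ** T \<noteq> 0"
    using S by (auto simp: sym_intertwiner_def)
  moreover have "(transpose T ** S ** T) ** (matrix_inv T ** B ** T)
      = (transpose T ** C ** transpose (matrix_inv T)) ** (transpose T ** S ** T)"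
    by (simp add: matrix_mul_assoc cancel) (metis SB matrix_mul_assoc)
  moreover have "transpose (transpose T ** S ** T) = transpose T ** S ** T"
    using S by (simp add: sym_intertwiner_def matrix_transpose_mul matrix_mul_assoc)
  ultimately show ?thesis
    by (simp add: sym_intertwiner_def)
qed

lemma ex_sym_intertwiner_congruence_iff:
  fixes T :: "real^'n^'n"
  assumes T: "invertible T"
  shows "(\<exists>S. sym_intertwiner S B C) \<longleftrightarrow>
    (\<exists>S. sym_intertwiner S (matrix_inv T ** B ** T) (transpose T ** C ** transpose (matrix_inv T)))"
proof
  assume "\<exists>S. sym_intertwiner S B C"
  then show "\<exists>S. sym_intertwiner S (matrix_inv T ** B ** T) (transpose T ** C ** transpose (matrix_inv T))"
    using sym_intertwiner_congruence[OF T] by blast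
next
  assume "\<exists>S. sym_intertwiner S (matrix_inv T ** B ** T) (transpose T ** C ** transpose (matrix_inv T))"
  then obtain S where "sym_intertwiner S (matrix_inv T ** B ** T) (transpose T ** C ** transpose (matrix_inv T))"
    by blast
  from sym_intertwiner_congruence[OF invertible_matrix_inv[OF T] this]
  show "\<exists>S. sym_intertwiner S B C"
    by (auto simp: matrix_inv_matrix_inv[OF T] matrix_mul_assoc transpose_matrix_inv[OF T]
        matrix_mul_cancel_right[OF transpose_matrix_inv(2)[OF T]]
        matrix_inv_right[OF T] matrix_mul_cancel_right[OF matrix_inv_right[OF T]])
qed

lemma ex_sym_intertwiner_conj_iff:
  fixes H R :: "real^'n^'n"
  assumes H: "invertible H"
  shows "(\<exists>S. sym_intertwiner S (matrix_inv H ** R ** H) R) \<longleftrightarrow>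
    (\<exists>X. X \<noteq> 0 \<and> X ** R = R ** X \<and> transpose (X ** H) = X ** H)"
proof
  assume "\<exists>S. sym_intertwiner S (matrix_inv H ** R ** H) R"
  then obtain S where S0: "S \<noteq> 0" and St: "transpose S = S"
    and SR: "S ** (matrix_inv H ** R ** H) = R ** S"
    unfolding sym_intertwiner_def by blast
  define X where "X = S ** matrix_inv H"
  have XH: "X ** H = S"
    by (simp add: X_def matrix_mul_cancel_right[OF matrix_inv_left[OF H]])
  have "X ** R = S ** (matrix_inv H ** R ** H) ** matrix_inv H"
    by (simp add: X_def matrix_mul_assoc matrix_mul_cancel_right[OF matrix_inv_right[OF H]])
  also have "\<dots> = R ** X"
    unfolding SR by (simp add: X_def matrix_mul_assoc)
  finally show "\<exists>X. X \<noteq> 0 \<and> X ** R = R ** X \<and> transpose (X ** H) = X ** H"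
    using XH S0 St by (intro exI[of _ X]) auto
next
  assume "\<exists>X. X \<noteq> 0 \<and> X ** R = R ** X \<and> transpose (X ** H) = X ** H"
  then obtain X where X0: "X \<noteq> 0" and XR: "X ** R = R ** X" and Xt: "transpose (X ** H) = X ** H"
    by blast
  have "X = X ** H ** matrix_inv H"
    by (simp add: matrix_mul_cancel_right[OF matrix_inv_right[OF H]])
  then have "X ** H \<noteq> 0" using X0 by auto
  moreover have "(X ** H) ** (matrix_inv H ** R ** H) = R ** (X ** H)"
    by (simp add: matrix_mul_assoc matrix_mul_cancel_right[OF matrix_inv_right[OF H]] XR)
  ultimately show "\<exists>S. sym_intertwiner S (matrix_inv H ** R ** H) R"
    using Xt unfolding sym_intertwiner_def by blast
qed

lemma det_one_minus_orthogonal_conj_eq_0_iff: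
  fixes H R :: "real^'n^'n"
  assumes H: "invertible H" and R: "R ** transpose R = mat 1"
  shows "det (mat 1 - R ** (matrix_inv H ** R ** H)) = 0 \<longleftrightarrow> det (H ** transpose R - R ** H) = 0"
proof -
  have Rt: "transpose R ** R = mat 1"
    using R matrix_left_right_inverse by blast
  have "H ** transpose R ** (mat 1 - R ** (matrix_inv H ** R ** H)) = H ** transpose R - R ** H"
    by (simp add: matrix_diff_ldistrib matrix_mul_assoc
        matrix_mul_cancel_right[OF Rt] matrix_inv_right[OF H])
  moreover have "det H \<noteq> 0"
    using H by (simp add: invertible_det_nz)
  moreover have "det (transpose R) \<noteq> 0"
    using R by (metis det_I det_mul mult_zero_right zero_neq_one)
  ultimately show ?thesis
    by (metis det_mul mult_eq_0_iff)
qed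

definition rot_commutant :: "real^3 \<Rightarrow> real^3^3" where
  "rot_commutant v = vector [vector [v$1, 0, 0], vector [0, v$2, - v$3], vector [0, v$3, v$2]]"

text \<open>The matrix N(H): row i is the i-th off-diagonal symmetry condition on \<open>rot_commutant v ** H\<close>,
  as a linear form in v.\<close>

definition sym_condition_mat :: "real^3^3 \<Rightarrow> real^3^3" where
  "sym_condition_mat H = vector [vector [H$1$2, - H$2$1, H$3$1], vector [H$1$3, - H$3$1, - H$2$1],
     vector [0, H$2$3 - H$3$2, - (H$2$2 + H$3$3)]]"

lemma rot_mat_orthogonal: "rot_mat t ** transpose (rot_mat t) = mat 1"
  by (simp add: rot_mat_def matrix_matrix_mult_def sum_3 transpose_def vec_eq_iff forall_3 mat_def
      flip: power2_eq_square)

lemma rot_commutant_eq_0_iff: "rot_commutant v = 0 \<longleftrightarrow> v = 0"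
  by (auto simp add: rot_commutant_def vec_eq_iff forall_3)

lemma rot_commutant_commute: "rot_commutant v ** rot_mat t = rot_mat t ** rot_commutant v"
  by (simp add: rot_commutant_def rot_mat_def matrix_matrix_mult_def sum_3 vec_eq_iff forall_3
      algebra_simps)

lemma plane_similarity_fixed_point:
  fixes x y c d :: real
  assumes "x * c + y * d = x" "y * c - x * d = y" "d \<noteq> 0"
  shows "x = 0 \<and> y = 0"
proof -
  have "((c - 1)^2 + d^2) * x = (c - 1) * (x*c + y*d - x) - d * (y*c - x*d - y)"
       "((c - 1)^2 + d^2) * y = d * (x*c + y*d - x) + (c - 1) * (y*c - x*d - y)"
    by (simp_all add: algebra_simps power2_eq_square)
  moreover have "(c - 1)^2 + d^2 \<noteq> 0"
    using assms(3) by (simp add: add_nonneg_eq_0_iff)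
  ultimately show ?thesis
    using assms by simp
qed

lemma commute_rot_mat_imp_rot_commutant:
  fixes X :: "real^3^3"
  assumes s: "sin t \<noteq> 0" and XR: "X ** rot_mat t = rot_mat t ** X"
  shows "X = rot_commutant (vector [X$1$1, X$2$2, X$3$2])"
proof -
  have E: "(X ** rot_mat t)$i$j = (rot_mat t ** X)$i$j" for i j
    using XR by simp
  note entry = matrix_matrix_mult_def sum_3 rot_mat_def
  have "X$1$2 * cos t + X$1$3 * sin t = X$1$2" "X$1$3 * cos t - X$1$2 * sin t = X$1$3"
    using E[of 1 2] E[of 1 3] by (simp_all add: entry)
  then have row1: "X$1$2 = 0 \<and> X$1$3 = 0"
    using plane_similarity_fixed_point s by blast
  have "X$2$1 * cos t + X$3$1 * - sin t = X$2$1" "X$3$1 * cos t - X$2$1 * - sin t = X$3$1"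
    using E[of 2 1] E[of 3 1] by (simp_all add: entry algebra_simps)
  then have col1: "X$2$1 = 0 \<and> X$3$1 = 0"
    using plane_similarity_fixed_point s by force
  have "sin t * (X$2$3 + X$3$2) = 0" "sin t * (X$3$3 - X$2$2) = 0"
    using E[of 2 2] E[of 2 3] by (simp_all add: entry algebra_simps)
  then have "X$2$3 = - X$3$2" "X$3$3 = X$2$2"
    using s by simp_all
  with row1 col1 show ?thesis
    by (simp add: rot_commutant_def vec_eq_iff forall_3)
qed

lemma symmetric_rot_commutant_mult_iff:
  fixes H :: "real^3^3"
  shows "transpose (rot_commutant v ** H) = rot_commutant v ** H \<longleftrightarrow> sym_condition_mat H *v v = 0"
  by (simp add: rot_commutant_def sym_condition_mat_def matrix_matrix_mult_def
      matrix_vector_mult_def transpose_def sum_3 vec_eq_iff forall_3 algebra_simps) linarith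

lemma det_rot_commutator:
  fixes H :: "real^3^3"
  shows "det (H ** transpose (rot_mat t) - rot_mat t ** H)
    = - 2 * sin t * (1 - cos t) * det (sym_condition_mat H)"
  unfolding det_3 sym_condition_mat_def rot_mat_def
  apply (simp add: matrix_matrix_mult_def sum_3 transpose_def)
  apply (simp add: algebra_simps power2_eq_square)
  using sin_cos_squared_add[of t] by algebra

lemma ex_commute_rot_mat_symmetric_iff:
  fixes H :: "real^3^3"
  assumes s: "sin t \<noteq> 0"
  shows "(\<exists>X. X \<noteq> 0 \<and> X ** rot_mat t = rot_mat t ** X \<and> transpose (X ** H) = X ** H)
    \<longleftrightarrow> det (H ** transpose (rot_mat t) - rot_mat t ** H) = 0"
proof -
  have "cos t \<noteq> 1"
    using s cos_one_sin_zero by blast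
  then have "det (H ** transpose (rot_mat t) - rot_mat t ** H) = 0 \<longleftrightarrow> det (sym_condition_mat H) = 0"
    using s by (simp add: det_rot_commutator)
  also have "\<dots> \<longleftrightarrow> (\<exists>v. v \<noteq> 0 \<and> sym_condition_mat H *v v = 0)"
    by (rule det_eq_0_iff_kernel)
  also have "\<dots> \<longleftrightarrow> (\<exists>X. X \<noteq> 0 \<and> X ** rot_mat t = rot_mat t ** X \<and> transpose (X ** H) = X ** H)"
  proof
    assume "\<exists>v. v \<noteq> 0 \<and> sym_condition_mat H *v v = 0"
    then show "\<exists>X. X \<noteq> 0 \<and> X ** rot_mat t = rot_mat t ** X \<and> transpose (X ** H) = X ** H"
      by (metis rot_commutant_commute rot_commutant_eq_0_iff symmetric_rot_commutant_mult_iff)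
  next
    assume "\<exists>X. X \<noteq> 0 \<and> X ** rot_mat t = rot_mat t ** X \<and> transpose (X ** H) = X ** H"
    then show "\<exists>v. v \<noteq> 0 \<and> sym_condition_mat H *v v = 0"
      by (metis commute_rot_mat_imp_rot_commutant[OF s] rot_commutant_eq_0_iff
          symmetric_rot_commutant_mult_iff)
  qed
  finally show ?thesis by blast
qed

theorem lemma11p4:
  fixes A G :: "real^3^3" and \<theta> :: real
  assumes "is_rotation A \<theta>" and "0 < \<theta>" and "\<theta> < pi"
    and "invertible G"
  shows "det (mat 1 - A ** (matrix_inv G ** transpose (matrix_inv A) ** G)) = 0 \<longleftrightarrow>
         (\<exists>S :: real^3^3. S \<noteq> 0 \<and> transpose S = S \<and>
            S ** (matrix_inv G ** transpose (matrix_inv A) ** G) = transpose (matrix_inv A) ** S)"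
proof -
  obtain Q \<mu> where A: "invertible A" and Q: "invertible Q" and \<mu>: "\<mu> \<noteq> 0"
    and QAQ: "matrix_inv Q ** A ** Q = \<mu> *\<^sub>R rot_mat \<theta>"
    using assms(1) unfolding is_rotation_def by blast
  define R where "R = rot_mat \<theta>"
  define C where "C = transpose (matrix_inv A)"
  define B where "B = matrix_inv G ** C ** G"
  define H where "H = transpose Q ** G ** Q"
  have R: "R ** transpose R = mat 1"
    by (simp add: R_def rot_mat_orthogonal)
  have H: "invertible H"
    using Q assms(4) by (simp add: H_def invertible_mult transpose_invertible)
  have QCQ: "transpose Q ** C ** transpose (matrix_inv Q) = (1 / \<mu>) *\<^sub>R R"
    using transpose_matrix_inv_similar[OF Q A] QAQ \<mu> R
    by (simp add: C_def R_def matrix_inv_scaleR_orthogonal transpose_scalar)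
  have QBQ: "matrix_inv Q ** B ** Q = (1 / \<mu>) *\<^sub>R (matrix_inv H ** R ** H)"
    using similar_conj_eq_congruence_conj[OF Q assms(4), of C]
    by (simp add: B_def H_def QCQ matrix_mul_scaleR_left matrix_mul_scaleR_right)
  have "det (mat 1 - A ** B) = det (mat 1 - R ** (matrix_inv H ** R ** H))"
    using det_one_minus_mult_similar[OF Q, of A B] \<mu>
    by (simp add: QAQ QBQ R_def matrix_mul_scaleR_left matrix_mul_scaleR_right)
  also have "\<dots> = 0 \<longleftrightarrow> det (H ** transpose R - R ** H) = 0"
    by (rule det_one_minus_orthogonal_conj_eq_0_iff[OF H R])
  also have "\<dots> \<longleftrightarrow> (\<exists>X. X \<noteq> 0 \<and> X ** R = R ** X \<and> transpose (X ** H) = X ** H)"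
    using ex_commute_rot_mat_symmetric_iff sin_gt_zero[OF assms(2,3)] by (simp add: R_def)
  also have "\<dots> \<longleftrightarrow>
      (\<exists>S. sym_intertwiner S (matrix_inv Q ** B ** Q) (transpose Q ** C ** transpose (matrix_inv Q)))"
    by (simp add: QBQ QCQ sym_intertwiner_scaleR \<mu> ex_sym_intertwiner_conj_iff[OF H])
  also have "\<dots> \<longleftrightarrow> (\<exists>S. sym_intertwiner S B C)"
    by (rule ex_sym_intertwiner_congruence_iff[OF Q, symmetric])
  finally show ?thesis
    by (simp add: sym_intertwiner_def B_def C_def)
qed

end
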